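(* Let $C_n(a,b)$ be a connected $2$-regular circulant digraph, and let $l\ge1$, $0\le k\le l$ with $la+k(b-a)=\omega n$ for a positive integer $\omega$. Then for each $p\in\mathcal{P}_{l,k}(C_n(a,b))$ there exist a positive integer $q$ with $q\mid\gcd(l,k)$ and $\gcd(q,\omega)=1$, a word $w\in\mathbb{L}_2^q(l,k)$, and a vertex $v$ such that $p=\varphi(w,v)$.
   Context: Let $n\ge 2$ and $0<a<b<n$ be integers with $\gcd(n,a,b)=1$. $C_n(a,b)$ has vertex set $\mathbb{Z}_n$ and directed bonds $(v,v+a)$, $(v,v+b)$ (addition mod $n$), with step sizes $a$, $b$. A path of length $l$ is a sequence of bonds $(e_1,\dots,e_l)$ with the terminus of $e_j$ equal to the origin of $e_{j+1}$; its $b$-count is the number of bonds of step size $b$; its step sequence is the sequence of step sizes; a circuit is a path whose last terminus equals its first origin. A periodic orbit is an equivalence class of circuits under cyclic rotation; it is primitive if it is not $[c_0^r]$ for a circuit $c_0$ and $r>1$ ($c_0^r$ = concatenation of $r$ copies). $\mathcal{P}_{l,k}(C_n(a,b))$ is the set of primitive periodic orbits of length $l$ and $b$-count $k$. Words over $\{a,b\}$ are ordered lexicographically with $a\prec b$; a word is Lyndon if strictly smaller than all its nontrivial cyclic rotations; $\mathbb{L}_2(l,k)$ is the set of Lyndon words of length $l$ with exactly $k$ letters $b$, and for $q\mid\gcd(l,k)$, $\mathbb{L}_2^q(l,k)=\{x^q: x\in\mathbb{L}_2(l/q,k/q)\}$. Identifying letters $a,b$ with step sizes $a,b$, $\psi(w,v)$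 is the unique path starting at vertex $v$ with step sequence $w$; when it is a circuit, $\varphi(w,v)=[\psi(w,v)]$. *)

theory Defs
  imports Main
begin

text \<open>Circulant digraph C_n(a,b): vertices 0..<n (representing Z_n), bonds are
  pairs (origin, terminus) of the form (v, (v+a) mod n) or (v, (v+b) mod n).\<close>

type_synonym bond = "nat \<times> nat"

definition bonds :: "nat \<Rightarrow> nat \<Rightarrow> nat \<Rightarrow> bond set" where
  "bonds n a b = {(v, (v + a) mod n) | v. v < n} \<union> {(v, (v + b) mod n) | v. v < n}"

definition is_path :: "nat \<Rightarrow> nat \<Rightarrow> nat \<Rightarrow> bond list \<Rightarrow> bool" where
  "is_path n a b c \<longleftrightarrow> set c \<subseteq> bonds n a b \<and>
     (\<forall>i. Suc i < length c \<longrightarrow> snd (c ! i) = fst (c ! Suc i))"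

definition is_circuit :: "nat \<Rightarrow> nat \<Rightarrow> nat \<Rightarrow> bond list \<Rightarrow> bool" where
  "is_circuit n a b c \<longleftrightarrow> c \<noteq> [] \<and> is_path n a b c \<and> snd (last c) = fst (hd c)"

definition bcount :: "nat \<Rightarrow> nat \<Rightarrow> bond list \<Rightarrow> nat" where
  "bcount n b c = length (filter (\<lambda>(u, v). v = (u + b) mod n) c)"

definition orbit :: "bond list \<Rightarrow> bond list set" where
  "orbit c = {rotate i c | i. i < length c}"

definition primitive_orbit :: "nat \<Rightarrow> nat \<Rightarrow> nat \<Rightarrow> bond list set \<Rightarrow> bool" where
  "primitive_orbit n a b p \<longleftrightarrow>
     \<not> (\<exists>c0 r. r > 1 \<and> is_circuit n a b c0 \<and> p = orbit (concat (replicate r c0)))"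

definition prim_orbits :: "nat \<Rightarrow> nat \<Rightarrow> nat \<Rightarrow> nat \<Rightarrow> nat \<Rightarrow> bond list set set" where
  "prim_orbits n a b l k =
     {orbit c | c. is_circuit n a b c \<and> length c = l \<and> bcount n b c = k
                  \<and> primitive_orbit n a b (orbit c)}"

datatype letter = La | Lb

definition letter_less :: "(letter \<times> letter) set" where
  "letter_less = {(La, Lb)}"

definition lyndon :: "letter list \<Rightarrow> bool" where
  "lyndon w \<longleftrightarrow> w \<noteq> [] \<and>
     (\<forall>i. 0 < i \<and> i < length w \<longrightarrow> (w, rotate i w) \<in> lexord letter_less)"

definition L2 :: "nat \<Rightarrow> nat \<Rightarrow> letter list set" where
  "L2 l k = {w. lyndon w \<and> length w = l \<and> count_list w Lb = k}"

definition L2q :: "nat \<Rightarrow> nat \<Rightarrow> nat \<Rightarrow> letter list set" where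
  "L2q q l k = {concat (replicate q x) | x. x \<in> L2 (l div q) (k div q)}"

definition step :: "nat \<Rightarrow> nat \<Rightarrow> letter \<Rightarrow> nat" where
  "step a b x = (case x of La \<Rightarrow> a | Lb \<Rightarrow> b)"

fun psi :: "nat \<Rightarrow> nat \<Rightarrow> nat \<Rightarrow> letter list \<Rightarrow> nat \<Rightarrow> bond list" where
  "psi n a b [] v = []"
| "psi n a b (x # w) v = (v, (v + step a b x) mod n) # psi n a b w ((v + step a b x) mod n)"

definition phi :: "nat \<Rightarrow> nat \<Rightarrow> nat \<Rightarrow> letter list \<Rightarrow> nat \<Rightarrow> bond list set" where
  "phi n a b w v = orbit (psi n a b w v)"

end

theory Submission
  imports Defs
begin

text \<open>Reading the step sizes of a circuit as a word over \<open>{a, b}\<close> identifies circuits with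
  pairs (word, start vertex), and rotating a circuit rotates its word. Every nonempty word has a
  rotation that is a power \<open>x\<^sup>q\<close> of a Lyndon word: take the least rotation and write it as a
  power of a primitive word. If \<open>d = gcd q \<omega> > 1\<close>, then the total step
  \<open>(l a + k (b - a)) / d = (\<omega> / d) n\<close> of \<open>x\<^sup>q\<^sup>/\<^sup>d\<close> is already a multiple of \<open>n\<close>, so the circuit is the
  \<open>d\<close>-fold repetition of a shorter circuit, contradicting primitivity.\<close>

section \<open>Words\<close>

abbreviation pow_list :: "nat \<Rightarrow> 'a list \<Rightarrow> 'a list" where
  "pow_list q x \<equiv> concat (replicate q x)"

lemma length_pow_list [simp]: "length (pow_list q x) = q * length x"
  by (induction q) auto

lemma count_list_pow_list: "count_list (pow_list q x) y = q * count_list x y"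
  by (induction q) auto

lemma sum_list_map_pow_list: "sum_list (map f (pow_list q x)) = q * sum_list (map f x)"
  by (induction q) auto

lemma pow_list_mult: "pow_list q (pow_list r x) = pow_list (q * r) x"
  by (induction q) (auto simp: replicate_add)

lemma nth_pow_list: "j < q * length x \<Longrightarrow> pow_list q x ! j = x ! (j mod length x)"
proof (induction q arbitrary: j)
  case (Suc q)
  then show ?case
    by (cases "j < length x") (auto simp: nth_append le_mod_geq)
qed simp

lemma rotate_pow_list: "rotate i (pow_list q x) = pow_list q (rotate i x)"
proof (rule nth_equalityI)
  fix j assume "j < length (rotate i (pow_list q x))"
  then have j: "j < q * length x" by simp
  then have L: "0 < q * length x" by linarith
  then have "rotate i (pow_list q x) ! j = x ! ((i + j) mod (q * length x) mod length x)"
    using j by (simp add: nth_rotate nth_pow_list)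
  also have "\<dots> = x ! ((i + j mod length x) mod length x)"
    by (simp add: mod_mod_cancel mod_add_right_eq)
  also have "\<dots> = pow_list q (rotate i x) ! j"
    using j L by (simp add: nth_rotate nth_pow_list)
  finally show "rotate i (pow_list q x) ! j = pow_list q (rotate i x) ! j" .
qed simp

lemma count_list_rotate: "count_list (rotate i x) y = count_list x y"
proof -
  let ?m = "i mod length x"
  have "count_list (rotate i x) y = count_list (drop ?m x) y + count_list (take ?m x) y"
    by (simp add: rotate_drop_take)
  also have "\<dots> = count_list (take ?m x @ drop ?m x) y"
    by (simp only: count_list_append add.commute)
  finally show ?thesis by simp
qed

definition primitive_word :: "'a list \<Rightarrow> bool" where
  "primitive_word x \<longleftrightarrow> \<not> (\<exists>r y. 1 < r \<and> x = pow_list r y)"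

lemma rotate_fixed_not_primitive:
  assumes "rotate i x = x" and "0 < i" and "i < length x"
  shows "\<not> primitive_word x"
proof -
  have "rotate i x = drop i x @ take i x"
    using assms(3) by (simp add: rotate_drop_take)
  then have "take i x @ drop i x = drop i x @ take i x"
    using assms(1) by simp
  moreover have "take i x \<noteq> []" and "drop i x \<noteq> []"
    using assms(2,3) by auto
  ultimately obtain r y where "1 < r" "pow_list r y = take i x @ drop i x"
    using comm_append_is_replicate by blast
  then show ?thesis by (auto simp: primitive_word_def)
qed

lemma pow_list_of_primitive:
  "x \<noteq> [] \<Longrightarrow> \<exists>q y. 0 < q \<and> x = pow_list q y \<and> primitive_word y"
proof (induction "length x" arbitrary: x rule: less_induct)
  case less
  show ?case
  proof (cases "primitive_word x")
    case True
    then show ?thesis by (intro exI[of _ 1] exI[of _ x]) simp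
  next
    case False
    then obtain r z where r: "1 < r" and x: "x = pow_list r z"
      by (auto simp: primitive_word_def)
    then have "z \<noteq> []" "length z < length x"
      using less.prems by auto
    then obtain q y where "0 < q" "z = pow_list q y" "primitive_word y"
      using less.hyps by blast
    then show ?thesis
      using r x by (intro exI[of _ "r * q"] exI[of _ y]) (simp add: pow_list_mult)
  qed
qed

section \<open>Lyndon words\<close>

text \<open>On words of equal length, \<open>lexord\<close> with \<open>a \<prec> b\<close> is the order of the binary
  numbers obtained by reading \<open>a\<close> as 0 and \<open>b\<close> as 1.\<close>

fun letter_bit :: "letter \<Rightarrow> nat" where
  "letter_bit La = 0"
| "letter_bit Lb = 1"

fun word_val :: "letter list \<Rightarrow> nat" where
  "word_val [] = 0"
| "word_val (x # w) = letter_bit x * 2 ^ length w + word_val w"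

lemma word_val_less: "word_val w < 2 ^ length w"
proof (induction w)
  case (Cons x w)
  then show ?case by (cases x) auto
qed simp

lemma word_val_append: "word_val (u @ v) = word_val u * 2 ^ length v + word_val v"
  by (induction u) (auto simp: algebra_simps power_add)

lemma letters_differ: "x \<noteq> y \<Longrightarrow> (x = La \<and> y = Lb) \<or> (x = Lb \<and> y = La)"
  by (cases x; cases y) auto

lemma word_val_inj: "length u = length v \<Longrightarrow> word_val u = word_val v \<Longrightarrow> u = v"
proof (induction u arbitrary: v)
  case (Cons x u)
  then obtain y v' where v: "v = y # v'" "length u = length v'"
    by (cases v) auto
  then have "x = y"
    using Cons.prems word_val_less[of u] word_val_less[of v'] letters_differ by fastforce
  then show ?case using Cons v by auto
qed simp

lemma word_val_less_imp_lexord: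
  "length u = length v \<Longrightarrow> word_val u < word_val v \<Longrightarrow> (u, v) \<in> lexord letter_less"
proof (induction u arbitrary: v)
  case (Cons x u)
  then obtain y v' where v: "v = y # v'" "length u = length v'"
    by (cases v) auto
  show ?case
  proof (cases "x = y")
    case True
    then show ?thesis using Cons v by auto
  next
    case False
    then show ?thesis
      using Cons.prems v word_val_less[of u] word_val_less[of v'] letters_differ[OF False]
      by (auto simp: letter_less_def)
  qed
qed simp

lemma word_val_pow_list_less:
  assumes "length y = length x" and "word_val y < word_val x" and "0 < q"
  shows "word_val (pow_list q y) < word_val (pow_list q x)"
proof -
  obtain q' where q: "q = Suc q'" using assms(3) by (cases q) auto
  let ?N = "2 ^ (q' * length x)"
  have "word_val (pow_list q y) = word_val y * ?N + word_val (pow_list q' y)"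
    using q assms(1) by (simp add: word_val_append)
  also have "\<dots> < (word_val y + 1) * ?N"
    using word_val_less[of "pow_list q' y"] assms(1) by simp
  also have "\<dots> \<le> word_val x * ?N"
    using assms(2) by (intro mult_right_mono) auto
  also have "\<dots> \<le> word_val (pow_list q x)"
    using q by (simp add: word_val_append)
  finally show ?thesis .
qed

lemma lyndon_if_primitive_least_rotation:
  assumes "x \<noteq> []" and "primitive_word x" and "\<And>i. word_val x \<le> word_val (rotate i x)"
  shows "lyndon x"
  unfolding lyndon_def
proof (intro conjI allI impI)
  fix i assume i: "0 < i \<and> i < length x"
  then have "rotate i x \<noteq> x"
    using assms(2) rotate_fixed_not_primitive by blast
  then have "word_val x \<noteq> word_val (rotate i x)"
    using word_val_inj[of x "rotate i x"] by auto
  then have "word_val x < word_val (rotate i x)"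
    using assms(3)[of i] by simp
  then show "(x, rotate i x) \<in> lexord letter_less"
    by (simp add: word_val_less_imp_lexord)
qed (fact assms(1))

lemma ex_least_rotation:
  assumes "s \<noteq> []"
  obtains i where "\<And>j. word_val (rotate i s) \<le> word_val (rotate j s)"
proof -
  let ?V = "(\<lambda>j. word_val (rotate j s)) ` {..<length s}"
  have "Min ?V \<in> ?V" using assms by (intro Min_in) auto
  then obtain i where i: "word_val (rotate i s) = Min ?V" by auto
  have "word_val (rotate i s) \<le> word_val (rotate j s)" for j
  proof -
    have "word_val (rotate j s) \<in> ?V"
      using assms by (subst rotate_conv_mod) auto
    then show ?thesis by (simp add: i)
  qed
  then show thesis by (rule that)
qed

lemma rotation_pow_list_lyndon:
  assumes "s \<noteq> []"
  obtains i q x where "0 < q" and "rotate i s = pow_list q x" and "lyndon x"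
proof -
  obtain i where least: "\<And>j. word_val (rotate i s) \<le> word_val (rotate j s)"
    using ex_least_rotation[OF assms] by blast
  obtain q x where q: "0 < q" and s: "rotate i s = pow_list q x" and prim: "primitive_word x"
    using pow_list_of_primitive[of "rotate i s"] assms by auto
  have "word_val x \<le> word_val (rotate j x)" for j
  proof (rule ccontr)
    assume "\<not> ?thesis"
    then have "word_val (pow_list q (rotate j x)) < word_val (pow_list q x)"
      using q by (intro word_val_pow_list_less) auto
    moreover have "pow_list q (rotate j x) = rotate (j + i) s"
      by (simp add: s rotate_pow_list flip: rotate_rotate)
    ultimately show False using least[of "j + i"] s by simp
  qed
  moreover have "x \<noteq> []" using s assms by auto
  ultimately show thesis
    using that q s prim lyndon_if_primitive_least_rotation by blast
qed

section \<open>Paths and circuits in \<open>C\<^sub>n(a, b)\<close>\<close>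

definition letter_of :: "nat \<Rightarrow> nat \<Rightarrow> bond \<Rightarrow> letter" where
  "letter_of n b e = (if snd e = (fst e + b) mod n then Lb else La)"

lemma bcount_eq_count_list: "bcount n b c = count_list (map (letter_of n b) c) Lb"
  by (induction c) (auto simp: bcount_def letter_of_def split: prod.splits)

lemma sum_list_steps:
  "a \<le> b \<Longrightarrow> sum_list (map (step a b) w) = length w * a + count_list w Lb * (b - a)"
proof (induction w)
  case (Cons x w)
  then show ?case by (cases x) (auto simp: step_def)
qed simp

lemma psi_append:
  "v < n \<Longrightarrow>
   psi n a b (u @ u') v = psi n a b u v @ psi n a b u' ((v + sum_list (map (step a b) u)) mod n)"
proof (induction u arbitrary: v)
  case (Cons x u)
  then show ?case
    using Cons.IH[of "(v + step a b x) mod n"] by (simp add: mod_add_left_eq add.assoc)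
qed simp

lemma psi_pow_list:
  "v < n \<Longrightarrow> (v + sum_list (map (step a b) u)) mod n = v \<Longrightarrow>
   psi n a b (pow_list d u) v = pow_list d (psi n a b u v)"
  by (induction d) (auto simp: psi_append)

lemma is_path_Cons:
  "is_path n a b (e # c) \<longleftrightarrow>
   e \<in> bonds n a b \<and> is_path n a b c \<and> (c \<noteq> [] \<longrightarrow> snd e = fst (hd c))"
  unfolding is_path_def
proof (intro iffI conjI allI impI)
  assume p: "set (e # c) \<subseteq> bonds n a b \<and>
    (\<forall>i. Suc i < length (e # c) \<longrightarrow> snd ((e # c) ! i) = fst ((e # c) ! Suc i))"
  fix i assume "Suc i < length c"
  then show "snd (c ! i) = fst (c ! Suc i)"
    using p[THEN conjunct2, rule_format, of "Suc i"] by simp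
next
  assume p: "set (e # c) \<subseteq> bonds n a b \<and>
    (\<forall>i. Suc i < length (e # c) \<longrightarrow> snd ((e # c) ! i) = fst ((e # c) ! Suc i))" and "c \<noteq> []"
  then show "snd e = fst (hd c)"
    using p[THEN conjunct2, rule_format, of 0] by (simp add: hd_conv_nth)
next
  assume h: "e \<in> bonds n a b \<and> (set c \<subseteq> bonds n a b \<and>
    (\<forall>i. Suc i < length c \<longrightarrow> snd (c ! i) = fst (c ! Suc i))) \<and> (c \<noteq> [] \<longrightarrow> snd e = fst (hd c))"
  fix i assume "Suc i < length (e # c)"
  with h show "snd ((e # c) ! i) = fst ((e # c) ! Suc i)"
    by (cases i) (auto simp: hd_conv_nth)
qed auto

lemma step_letter_of:
  assumes "e \<in> bonds n a b" and "a < b" and "b < n"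
  shows "(fst e + step a b (letter_of n b e)) mod n = snd e"
proof -
  have "(u + a) mod n \<noteq> (u + b) mod n" if "u < n" for u
    using that assms(2,3) by (auto simp: mod_if)
  then show ?thesis
    using assms(1) by (auto simp: bonds_def letter_of_def step_def)
qed

lemma path_eq_psi:
  assumes "a < b" and "b < n"
  shows "is_path n a b c \<Longrightarrow> c \<noteq> [] \<Longrightarrow> c = psi n a b (map (letter_of n b) c) (fst (hd c))"
proof (induction c)
  case (Cons e c)
  then have "e \<in> bonds n a b" "is_path n a b c" "c \<noteq> [] \<longrightarrow> snd e = fst (hd c)"
    by (auto simp: is_path_Cons)
  then show ?case
    using Cons.IH step_letter_of[OF _ assms] by (cases e; cases "c = []") auto
qed simp

lemma is_circuit_iff_cyclic:
  "is_circuit n a b c \<longleftrightarrow> c \<noteq> [] \<and> set c \<subseteq> bonds n a b \<and>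
     (\<forall>i < length c. snd (c ! i) = fst (c ! (Suc i mod length c)))"
proof (cases "c = []")
  case False
  have "(\<forall>i < length c. snd (c ! i) = fst (c ! (Suc i mod length c))) \<longleftrightarrow>
      (\<forall>i. Suc i < length c \<longrightarrow> snd (c ! i) = fst (c ! Suc i)) \<and> snd (last c) = fst (hd c)"
  proof (intro iffI conjI allI impI)
    assume cyc: "\<forall>i < length c. snd (c ! i) = fst (c ! (Suc i mod length c))"
    show "snd (c ! i) = fst (c ! Suc i)" if "Suc i < length c" for i
      using cyc that by auto
    show "snd (last c) = fst (hd c)"
      using cyc[rule_format, of "length c - 1"] False by (simp add: last_conv_nth hd_conv_nth)
  next
    fix i assume adj: "(\<forall>i. Suc i < length c \<longrightarrow> snd (c ! i) = fst (c ! Suc i)) \<and>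
      snd (last c) = fst (hd c)" and i: "i < length c"
    show "snd (c ! i) = fst (c ! (Suc i mod length c))"
    proof (cases "Suc i < length c")
      case False
      then have "i = length c - 1" using i by simp
      then show ?thesis using adj \<open>c \<noteq> []\<close> by (simp add: last_conv_nth hd_conv_nth)
    qed (use adj in simp)
  qed
  then show ?thesis
    unfolding is_circuit_def is_path_def by blast
qed (simp add: is_circuit_def)

lemma is_circuit_rotate:
  assumes "is_circuit n a b c"
  shows "is_circuit n a b (rotate k c)"
proof -
  have L: "0 < length c" and s: "set c \<subseteq> bonds n a b"
    and cyc: "\<And>i. i < length c \<Longrightarrow> snd (c ! i) = fst (c ! (Suc i mod length c))"
    using assms by (auto simp: is_circuit_iff_cyclic)
  have "snd (rotate k c ! i) = fst (rotate k c ! (Suc i mod length c))" if "i < length c" for i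
  proof -
    have "(k + Suc i mod length c) mod length c = Suc ((k + i) mod length c) mod length c"
      by (simp add: mod_add_right_eq mod_Suc_eq)
    then show ?thesis
      using that L cyc[of "(k + i) mod length c"] by (simp add: nth_rotate)
  qed
  then show ?thesis using L s by (auto simp: is_circuit_iff_cyclic)
qed

lemma is_circuit_pow_list_base:
  assumes "is_circuit n a b (pow_list d c)"
  shows "is_circuit n a b c"
proof -
  let ?c = "pow_list d c"
  have d: "0 < d" and L: "0 < length c"
    using assms by (auto simp: is_circuit_def)
  have "set c \<subseteq> bonds n a b"
    using assms d by (auto simp: is_circuit_iff_cyclic gr0_conv_Suc)
  moreover have "snd (c ! i) = fst (c ! (Suc i mod length c))" if i: "i < length c" for i
  proof -
    have "length c \<le> d * length c"
      using d by simp
    with i have i': "i < d * length c" by linarith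
    then have "snd (?c ! i) = fst (?c ! (Suc i mod length ?c))"
      using assms by (simp add: is_circuit_iff_cyclic)
    then show ?thesis
      using i i' L d by (simp add: nth_pow_list mod_mod_cancel)
  qed
  ultimately show ?thesis using L by (simp add: is_circuit_iff_cyclic)
qed

section \<open>Periodic orbits\<close>

lemma orbit_eq_range: "c \<noteq> [] \<Longrightarrow> orbit c = range (\<lambda>j. rotate j c)"
  unfolding orbit_def by (auto intro: exI[of _ "_ mod length c"] simp flip: rotate_conv_mod)

lemma orbit_rotate:
  assumes "c \<noteq> []"
  shows "orbit (rotate i c) = orbit c"
proof -
  have "rotate j c = rotate (j + length c * i - i) (rotate i c)" for j
  proof -
    have "1 * i \<le> length c * i"
      using assms by (intro mult_right_mono) (auto simp: Suc_le_eq)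
    then have "i \<le> j + length c * i" by linarith
    then have "rotate (j + length c * i - i) (rotate i c) = rotate (j + length c * i) c"
      by (simp add: rotate_rotate)
    also have "\<dots> = rotate j c"
      by (subst (1 2) rotate_conv_mod) simp
    finally show ?thesis by simp
  qed
  then have "range (\<lambda>j. rotate j (rotate i c)) = range (\<lambda>j. rotate j c)"
    by (auto simp: rotate_rotate)
  then show ?thesis using assms by (simp add: orbit_eq_range)
qed

lemma coprime_exponent_if_primitive:
  assumes v: "v < n"
    and circuit: "is_circuit n a b (psi n a b (pow_list q x) v)"
    and prim: "primitive_orbit n a b (phi n a b (pow_list q x) v)"
    and total: "sum_list (map (step a b) (pow_list q x)) = \<omega> * n"
  shows "coprime q \<omega>"
proof -
  define d where "d = gcd q \<omega>"
  have "0 < q"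
    using circuit by (cases q) (auto simp: is_circuit_def)
  then have "0 < d" by (simp add: d_def)
  have "d dvd q" by (simp add: d_def)
  then obtain r where q: "q = d * r" by (rule dvdE)
  have "d dvd \<omega>" by (simp add: d_def)
  then obtain \<omega>' where \<omega>: "\<omega> = d * \<omega>'" by (rule dvdE)
  define S where "S = sum_list (map (step a b) x)"
  have "d * (r * S) = d * (\<omega>' * n)"
    using total by (simp add: S_def sum_list_map_pow_list q \<omega> mult.assoc)
  then have "r * S = \<omega>' * n"
    using \<open>0 < d\<close> by simp
  then have "(v + sum_list (map (step a b) (pow_list r x))) mod n = v"
    using v by (simp add: sum_list_map_pow_list S_def)
  then have "psi n a b (pow_list d (pow_list r x)) v = pow_list d (psi n a b (pow_list r x) v)"
    by (rule psi_pow_list[OF v])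
  then have split: "psi n a b (pow_list q x) v = pow_list d (psi n a b (pow_list r x) v)"
    by (simp add: q pow_list_mult)
  have "\<not> 1 < d"
  proof
    assume "1 < d"
    moreover have "is_circuit n a b (psi n a b (pow_list r x) v)"
      using circuit split is_circuit_pow_list_base by simp
    ultimately show False
      using prim split unfolding primitive_orbit_def phi_def by auto
  qed
  with \<open>0 < d\<close> have "d = 1" by simp
  then show ?thesis by (simp add: d_def coprime_iff_gcd_eq_1)
qed

lemma circuit_rotation_eq_psi_lyndon_power:
  assumes c: "is_circuit n a b c" and "a < b" and "b < n"
  obtains i q x v where "0 < q" and "lyndon x" and "v < n"
    and "rotate i c = psi n a b (pow_list q x) v"
    and "q * length x = length c" and "q * count_list x Lb = bcount n b c"
proof -
  have "c \<noteq> []" using c by (simp add: is_circuit_def)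
  then have "map (letter_of n b) c \<noteq> []" by simp
  then obtain i q x where q: "0 < q" and word: "rotate i (map (letter_of n b) c) = pow_list q x"
    and "lyndon x"
    by (rule rotation_pow_list_lyndon)
  define v where "v = fst (hd (rotate i c))"
  have circuit: "is_circuit n a b (rotate i c)"
    using c by (rule is_circuit_rotate)
  then have "v < n"
    using \<open>c \<noteq> []\<close> by (cases "rotate i c") (auto simp: v_def is_circuit_def is_path_def bonds_def)
  have "rotate i c = psi n a b (map (letter_of n b) (rotate i c)) v"
    using path_eq_psi[OF assms(2,3)] circuit by (simp add: is_circuit_def v_def)
  with word have "rotate i c = psi n a b (pow_list q x) v"
    by (simp add: rotate_map)
  moreover have "q * length x = length c" and "q * count_list x Lb = bcount n b c"
    using arg_cong[OF word, of length] arg_cong[OF word, of "\<lambda>w. count_list w Lb"]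
    by (simp_all add: count_list_pow_list count_list_rotate bcount_eq_count_list)
  ultimately show thesis
    using that q \<open>lyndon x\<close> \<open>v < n\<close> by blast
qed

theorem mainTheorem13:
  fixes n a b l k \<omega> :: nat
  assumes "2 \<le> n" and "0 < a" and "a < b" and "b < n"
    and "gcd n (gcd a b) = 1"
    and "1 \<le> l" and "k \<le> l"
    and "0 < \<omega>" and "l * a + k * (b - a) = \<omega> * n"
  shows "\<forall>p \<in> prim_orbits n a b l k.
           \<exists>q w v. 0 < q \<and> q dvd gcd l k \<and> coprime q \<omega> \<and> w \<in> L2q q l k \<and> v < n
                 \<and> is_circuit n a b (psi n a b w v) \<and> p = phi n a b w v"
proof
  fix p assume "p \<in> prim_orbits n a b l k"
  then obtain c where c: "is_circuit n a b c" "length c = l" "bcount n b c = k"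
    "primitive_orbit n a b (orbit c)" "p = orbit c"
    by (auto simp: prim_orbits_def)
  obtain i q x v where q: "0 < q" and "lyndon x" and "v < n"
    and psi: "rotate i c = psi n a b (pow_list q x) v"
    and l: "q * length x = l" and k: "q * count_list x Lb = k"
    using circuit_rotation_eq_psi_lyndon_power[OF c(1) assms(3,4)] c(2,3) by metis
  have circuit: "is_circuit n a b (psi n a b (pow_list q x) v)"
    using is_circuit_rotate[OF c(1), of i] by (simp add: psi)
  have p: "p = phi n a b (pow_list q x) v"
    using c(1,5) orbit_rotate[of c i] by (simp add: phi_def is_circuit_def flip: psi)
  have "sum_list (map (step a b) (pow_list q x)) = \<omega> * n"
    using l k assms(3,9) by (simp add: sum_list_steps count_list_pow_list mult.assoc)
  then have "coprime q \<omega>"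
    using coprime_exponent_if_primitive[OF \<open>v < n\<close> circuit] c(4) p by (simp add: c(5))
  moreover have "pow_list q x \<in> L2q q l k"
    using \<open>lyndon x\<close> l k q by (auto simp: L2q_def L2_def)
  moreover have "q dvd gcd l k"
    by (simp flip: l k)
  ultimately show "\<exists>q w v. 0 < q \<and> q dvd gcd l k \<and> coprime q \<omega> \<and> w \<in> L2q q l k \<and> v < n
                 \<and> is_circuit n a b (psi n a b w v) \<and> p = phi n a b w v"
    using q \<open>v < n\<close> circuit p by blast
qed

end
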